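(* Let $X$ be a separable Banach space over $\mathbb{K}\in\{\mathbb{R},\mathbb{C}\}$ and $T\colon X\to X$ a bounded linear operator. Then $\mathrm{Prox}_k(T)$ is dense in $X^k$ for every $k\geq 2$ if and only if there exist a sequence $\{p_n\}$ in $\mathbb{N}$ and a dense subset $K$ of $X$ such that $\lim_{n\to\infty}T^{p_n}x=0$ for every $x\in K$.
   Context: For $k\geq 2$, $\mathrm{Prox}_k(T)=\{(x_1,\dots,x_k)\in X^k: \liminf_{n\to\infty}\max_{1\leq i<j\leq k}\|T^nx_i-T^nx_j\|=0\}$. *)

theory Defs
  imports "HOL-Analysis.Analysis"
begin

text \<open>k-tuples of X are modelled as extensional functions on {..<k}.
  Prox_k(T): tuples whose pairwise orbit-distance max has liminf 0.\<close>

definition Prox :: "nat \<Rightarrow> ('a::real_normed_vector \<Rightarrow> 'a) \<Rightarrow> (nat \<Rightarrow> 'a) set" where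
  "Prox k T = {x \<in> PiE {..<k} (\<lambda>_. UNIV).
      liminf (\<lambda>n. ereal (Max {norm ((T ^^ n) (x i) - (T ^^ n) (x j)) | i j. i < j \<and> j < k})) = 0}"

definition dense_in_power :: "nat \<Rightarrow> (nat \<Rightarrow> 'a::metric_space) set \<Rightarrow> bool" where
  "dense_in_power k A \<longleftrightarrow>
     (\<forall>y \<in> PiE {..<k} (\<lambda>_. UNIV). \<forall>e>0. \<exists>x\<in>A. \<forall>i<k. dist (x i) (y i) < e)"

end

theory Submission
  imports Defs
begin

text \<open>If \<open>T ^^ p n\<close> tends to 0 pointwise on a dense set \<open>K\<close>, approximate a \<open>k\<close>-tuple by one
  from \<open>K\<close>; since \<open>T ^^ N\<close> is continuous, the times \<open>N + p n\<close> also shrink all its orbits, so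
  the tuple is proximal.

  Conversely, density of \<open>Prox (m + 2) T\<close> lets us move any points \<open>u 0, \<dots>, u m\<close> slightly so
  that at some late time \<open>n\<close> all \<open>(T ^^ n) (v i)\<close> are small: approximate \<open>(0, u 0, \<dots>, u m)\<close>
  by a proximal tuple \<open>x\<close> and put \<open>v i = x (i + 1) - x 0\<close>. Iterating, stage \<open>m\<close> adds the
  \<open>m\<close>-th term of a dense sequence in which every point recurs, and moves the earlier points so
  little that the move stays below \<open>2 ^ -(m + 1)\<close> under every \<open>T ^^ j\<close> with \<open>j\<close> up to the
  previous time. The points converge to limits \<open>w i\<close> with \<open>norm ((T ^^ p l) (w i)) \<le> 2 ^ (1 - l)\<close>
  for \<open>i \<le> l\<close> and \<open>dist (w i) (d i) \<le> 2 ^ (1 - i)\<close>, so \<open>range w\<close> is dense.\<close>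

lemma bounded_linear_funpow:
  fixes T :: "'a::real_normed_vector \<Rightarrow> 'a"
  assumes "bounded_linear T"
  shows "bounded_linear (T ^^ n)"
  by (induction n) (simp_all add: bounded_linear_ident[unfolded id_def] bounded_linear_compose assms)

lemma funpow_small_near_0:
  fixes T :: "'a::real_normed_vector \<Rightarrow> 'a"
  assumes "bounded_linear T" and "e > 0"
  shows "\<exists>\<delta>>0. \<forall>x. norm x < \<delta> \<longrightarrow> (\<forall>j\<le>P. norm ((T ^^ j) x) < e)"
proof -
  have "\<forall>j\<in>{..P}. eventually (\<lambda>x. norm ((T ^^ j) x) < e) (nhds 0)"
  proof
    fix j
    have "((\<lambda>x. (T ^^ j) x) \<longlongrightarrow> 0) (nhds 0)"
      by (rule bounded_linear.tendsto_zero[OF bounded_linear_funpow[OF assms(1)] filterlim_ident])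
    then show "eventually (\<lambda>x. norm ((T ^^ j) x) < e) (nhds 0)"
      using assms(2) by (auto simp: tendsto_iff)
  qed
  then have "eventually (\<lambda>x. \<forall>j\<in>{..P}. norm ((T ^^ j) x) < e) (nhds 0)"
    by (rule eventually_ball_finite[rotated]) simp
  then show ?thesis by (auto simp: eventually_nhds_metric dist_norm)
qed

lemma liminf_ereal_eq_0_iff:
  fixes h :: "nat \<Rightarrow> real"
  assumes "\<And>n. 0 \<le> h n"
  shows "liminf (\<lambda>n. ereal (h n)) = 0 \<longleftrightarrow> (\<forall>c>0. \<exists>\<^sub>F n in sequentially. h n < c)"
proof
  assume lim: "liminf (\<lambda>n. ereal (h n)) = 0"
  show "\<forall>c>0. \<exists>\<^sub>F n in sequentially. h n < c"
  proof (intro allI impI, rule ccontr)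
    fix c :: real
    assume "c > 0" and "\<not> (\<exists>\<^sub>F n in sequentially. h n < c)"
    then have "eventually (\<lambda>n. ereal c \<le> ereal (h n)) sequentially"
      by (simp add: not_frequently not_less)
    then have "ereal c \<le> liminf (\<lambda>n. ereal (h n))" by (rule Liminf_bounded)
    with lim \<open>c > 0\<close> show False by simp
  qed
next
  assume small: "\<forall>c>0. \<exists>\<^sub>F n in sequentially. h n < c"
  have "0 \<le> liminf (\<lambda>n. ereal (h n))" by (rule Liminf_bounded) (simp add: assms)
  moreover have "\<not> 0 < liminf (\<lambda>n. ereal (h n))"
  proof
    assume "0 < liminf (\<lambda>n. ereal (h n))"
    then obtain z where z: "0 < ereal z" "ereal z < liminf (\<lambda>n. ereal (h n))"
      using ereal_dense2 by blast
    have "eventually (\<lambda>n. z < h n) sequentially"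
      using less_LiminfD[OF z(2)] by simp
    moreover have "\<exists>\<^sub>F n in sequentially. h n < z"
      using small z(1) by simp
    ultimately have "\<exists>\<^sub>F n in sequentially. False"
      by (rule frequently_eventually_conj[rotated, THEN frequently_elim1]) auto
    then show False by simp
  qed
  ultimately show "liminf (\<lambda>n. ereal (h n)) = 0" by simp
qed

lemma finite_pairs_image: "finite {f i j | i j. i < j \<and> j < (k::nat)}"
proof -
  have "{f i j | i j. i < j \<and> j < k} \<subseteq> (\<lambda>(i, j). f i j) ` ({..<k} \<times> {..<k})"
    by force
  then show ?thesis by (rule finite_subset) auto
qed

lemma Prox_iff:
  fixes T :: "'a::real_normed_vector \<Rightarrow> 'a"
  assumes "2 \<le> k"
  shows "x \<in> Prox k T \<longleftrightarrow> x \<in> PiE {..<k} (\<lambda>_. UNIV) \<and>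
    (\<forall>c>0. \<exists>\<^sub>F n in sequentially. \<forall>i j. i < j \<and> j < k \<longrightarrow> norm ((T ^^ n) (x i) - (T ^^ n) (x j)) < c)"
proof -
  define D where "D n = {norm ((T ^^ n) (x i) - (T ^^ n) (x j)) | i j. i < j \<and> j < k}" for n
  have D_ne: "norm ((T ^^ n) (x 0) - (T ^^ n) (x 1)) \<in> D n" for n
    unfolding D_def using assms by force
  have fin: "finite (D n)" for n
    unfolding D_def by (rule finite_pairs_image)
  have "0 \<le> Max (D n)" for n
    by (rule order_trans[OF norm_ge_zero Max_ge[OF fin D_ne]])
  then have "liminf (\<lambda>n. ereal (Max (D n))) = 0 \<longleftrightarrow> (\<forall>c>0. \<exists>\<^sub>F n in sequentially. Max (D n) < c)"
    by (rule liminf_ereal_eq_0_iff)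
  moreover have "Max (D n) < c \<longleftrightarrow> (\<forall>i j. i < j \<and> j < k \<longrightarrow> norm ((T ^^ n) (x i) - (T ^^ n) (x j)) < c)" for n c
    using D_ne[of n] fin[of n] by (subst Max_less_iff) (auto simp: D_def)
  ultimately show ?thesis
    unfolding Prox_def D_def by simp
qed

lemma convergent_if_geometric_steps:
  fixes z :: "nat \<Rightarrow> 'a::banach"
  assumes "\<And>m. l \<le> m \<Longrightarrow> norm (z (Suc m) - z m) \<le> (1/2) ^ Suc m"
  shows "convergent z"
proof -
  have "summable (\<lambda>m. z (Suc m) - z m)"
    by (rule summable_comparison_test'[OF _ assms]) simp_all
  then have "convergent (\<lambda>n. z 0 + (\<Sum>m<n. z (Suc m) - z m))"
    by (intro convergent_add convergent_const) (simp add: summable_iff_convergent)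
  then show ?thesis by (simp add: sum_lessThan_telescope)
qed

lemma norm_limit_diff_le_if_geometric_steps:
  fixes z :: "nat \<Rightarrow> 'a::real_normed_vector"
  assumes steps: "\<And>m. l \<le> m \<Longrightarrow> norm (z (Suc m) - z m) \<le> (1/2) ^ Suc m"
    and lim: "z \<longlonglongrightarrow> w"
  shows "norm (w - z l) \<le> (1/2) ^ l"
proof -
  have tail: "norm (z M - z l) \<le> (1/2) ^ l - (1/2) ^ M" if "l \<le> M" for M
    using that
  proof (induction M rule: dec_induct)
    case base
    then show ?case by simp
  next
    case (step M)
    have "norm (z (Suc M) - z l) \<le> norm (z (Suc M) - z M) + norm (z M - z l)"
      using norm_triangle_ineq[of "z (Suc M) - z M" "z M - z l"] by simp
    also have "\<dots> \<le> (1/2) ^ Suc M + ((1/2) ^ l - (1/2) ^ M)"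
      using steps step by (intro add_mono) auto
    also have "\<dots> = (1/2) ^ l - (1/2) ^ Suc M"
      by simp
    finally show ?case .
  qed
  have "(\<lambda>M. norm (z M - z l)) \<longlonglongrightarrow> norm (w - z l)"
    by (intro tendsto_intros lim)
  moreover have "norm (z M - z l) \<le> (1/2) ^ l" if "l \<le> M" for M
    using tail[OF that] zero_le_power[of "1/2::real" M] by linarith
  ultimately show ?thesis
    by (intro LIMSEQ_le_const2) auto
qed

lemma separable_imp_recurrent_dense_sequence:
  assumes "separable_space (euclidean :: 'a topology)"
  obtains d :: "nat \<Rightarrow> 'a::metric_space" where "\<And>x e N. e > 0 \<Longrightarrow> \<exists>i\<ge>N. dist (d i) x < e"
proof -
  obtain C :: "'a set" where C: "countable C" "closure C = UNIV"
    using assms unfolding separable_space_def euclidean_closure_of by auto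
  then have "C \<noteq> {}" by auto
  define d where "d i = from_nat_into C (fst (prod_decode i))" for i
  have "\<exists>i\<ge>N. dist (d i) x < e" if e: "e > 0" for x e N
  proof -
    obtain c where "c \<in> C" "dist c x < e"
      using C(2) e by (metis UNIV_I closure_approachable)
    moreover obtain a where "c = from_nat_into C a"
      using \<open>c \<in> C\<close> \<open>C \<noteq> {}\<close> C(1) by (metis from_nat_into_surj)
    ultimately have "dist (d (prod_encode (a, N))) x < e"
      by (simp add: d_def)
    then show ?thesis using le_prod_encode_2 by blast
  qed
  then show thesis by (rule that)
qed

lemma dense_range_if_close_to_recurrent:
  fixes d w :: "nat \<Rightarrow> 'a::metric_space"
  assumes d: "\<And>x e N. e > 0 \<Longrightarrow> \<exists>i\<ge>N. dist (d i) x < e"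
    and close: "(\<lambda>i. dist (w i) (d i)) \<longlonglongrightarrow> 0"
  shows "closure (range w) = UNIV"
proof -
  have "\<exists>i. dist (w i) y < e" if "e > 0" for y e
  proof -
    have "eventually (\<lambda>i. dist (w i) (d i) < e / 2) sequentially"
      using order_tendstoD(2)[OF close, of "e / 2"] \<open>e > 0\<close> by simp
    then obtain N where N: "\<And>i. N \<le> i \<Longrightarrow> dist (w i) (d i) < e / 2"
      by (auto simp: eventually_sequentially)
    obtain i where "N \<le> i" "dist (d i) y < e / 2"
      using d \<open>e > 0\<close> by (meson half_gt_zero)
    with N have "dist (w i) y < e"
      using dist_triangle[of "w i" y "d i"] by fastforce
    then show ?thesis ..
  qed
  then show ?thesis
    by (auto simp: closure_approachable)
qed

lemma dense_Prox_approx_small_orbit: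
  fixes T :: "'a::real_normed_vector \<Rightarrow> 'a"
  assumes "bounded_linear T"
    and dense: "dense_in_power (Suc (Suc m)) (Prox (Suc (Suc m)) T)" and "e > 0"
  shows "\<exists>v n. N \<le> n \<and> (\<forall>i\<le>m. norm (v i - u i) < e \<and> norm ((T ^^ n) (v i)) < e)"
proof -
  define y where "y = restrict (\<lambda>i. if i = 0 then 0 else u (i - 1)) {..<Suc (Suc m)}"
  have "y \<in> PiE {..<Suc (Suc m)} (\<lambda>_. UNIV)"
    by (simp add: y_def)
  then have "\<exists>x\<in>Prox (Suc (Suc m)) T. \<forall>i<Suc (Suc m). dist (x i) (y i) < e / 2"
    by (rule dense[unfolded dense_in_power_def, rule_format]) (use \<open>e > 0\<close> in simp)
  then obtain x where x: "x \<in> Prox (Suc (Suc m)) T"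
    and near: "\<forall>i<Suc (Suc m). dist (x i) (y i) < e / 2"
    by blast
  from x have "\<forall>c>0. \<exists>\<^sub>F n in sequentially. \<forall>i j. i < j \<and> j < Suc (Suc m) \<longrightarrow>
      norm ((T ^^ n) (x i) - (T ^^ n) (x j)) < c"
    by (simp add: Prox_iff)
  with \<open>e > 0\<close> have "\<exists>\<^sub>F n in sequentially. \<forall>i j. i < j \<and> j < Suc (Suc m) \<longrightarrow>
      norm ((T ^^ n) (x i) - (T ^^ n) (x j)) < e"
    by blast
  then obtain n where "N \<le> n"
    and prox: "\<forall>i j. i < j \<and> j < Suc (Suc m) \<longrightarrow> norm ((T ^^ n) (x i) - (T ^^ n) (x j)) < e"
    unfolding frequently_sequentially by blast
  have lin: "linear (T ^^ n)"
    by (rule bounded_linear.linear[OF bounded_linear_funpow[OF assms(1)]])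
  have v: "norm ((x (Suc i) - x 0) - u i) < e \<and> norm ((T ^^ n) (x (Suc i) - x 0)) < e" if "i \<le> m" for i
  proof
    have "norm ((x (Suc i) - x 0) - u i) \<le> norm (x (Suc i) - u i) + norm (x 0)"
      using norm_triangle_ineq4[of "x (Suc i) - u i" "x 0"] by (simp add: algebra_simps)
    also have "\<dots> < e"
      using near[rule_format, of "Suc i"] near[rule_format, of 0] that by (simp add: y_def dist_norm)
    finally show "norm ((x (Suc i) - x 0) - u i) < e" .
    have "norm ((T ^^ n) (x (Suc i) - x 0)) = norm ((T ^^ n) (x 0) - (T ^^ n) (x (Suc i)))"
      by (subst norm_minus_commute) (simp add: linear_diff[OF lin])
    also have "\<dots> < e"
      using prox[rule_format, of 0 "Suc i"] that by simp
    finally show "norm ((T ^^ n) (x (Suc i) - x 0)) < e" .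
  qed
  show ?thesis
    by (intro exI[of _ "\<lambda>i. x (Suc i) - x 0"] exI[of _ n]) (simp add: \<open>N \<le> n\<close> v)
qed

lemma dense_Prox_approx_small_orbit_funpow:
  fixes T :: "'a::real_normed_vector \<Rightarrow> 'a"
  assumes "bounded_linear T"
    and "dense_in_power (Suc (Suc m)) (Prox (Suc (Suc m)) T)" and "e > 0"
  shows "\<exists>v n. N \<le> n \<and>
    (\<forall>i\<le>m. (\<forall>j\<le>P. norm ((T ^^ j) (v i - u i)) < e) \<and> norm ((T ^^ n) (v i)) < e)"
proof -
  obtain \<delta> where "\<delta> > 0" and \<delta>: "\<And>x j. norm x < \<delta> \<Longrightarrow> j \<le> P \<Longrightarrow> norm ((T ^^ j) x) < e"
    using funpow_small_near_0[OF assms(1) \<open>e > 0\<close>] by blast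
  have "\<exists>v n. N \<le> n \<and> (\<forall>i\<le>m. norm (v i - u i) < min \<delta> e \<and> norm ((T ^^ n) (v i)) < min \<delta> e)"
    by (rule dense_Prox_approx_small_orbit[OF assms(1,2)]) (use \<open>\<delta> > 0\<close> \<open>e > 0\<close> in simp)
  then obtain v n where "N \<le> n"
    and "\<forall>i\<le>m. norm (v i - u i) < \<delta> \<and> norm ((T ^^ n) (v i)) < e"
    by auto
  then show ?thesis
    by (intro exI[of _ v] exI[of _ n]) (auto intro: \<delta>)
qed

lemma nested_small_orbit_approximations:
  fixes T :: "'a::real_normed_vector \<Rightarrow> 'a" and d :: "nat \<Rightarrow> 'a"
  assumes approx: "\<And>(m::nat) u e N P. e > 0 \<Longrightarrow> \<exists>v n. N \<le> n \<and>
    (\<forall>i\<le>m. (\<forall>j\<le>P. norm ((T ^^ j) (v i - u i)) < e) \<and> norm ((T ^^ n) (v i)) < e)"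
  obtains p :: "nat \<Rightarrow> nat" and V :: "nat \<Rightarrow> nat \<Rightarrow> 'a"
  where "strict_mono p"
    and "\<And>m i. i \<le> m \<Longrightarrow> norm ((T ^^ p m) (V m i)) < (1/2) ^ m"
    and "\<And>m. norm (V m m - d m) < (1/2) ^ m"
    and "\<And>m i j. i \<le> m \<Longrightarrow> j \<le> p m \<Longrightarrow> norm ((T ^^ j) (V (Suc m) i - V m i)) < (1/2) ^ Suc m"
proof -
  define stage where "stage m VP \<longleftrightarrow>
      (\<forall>i\<le>m. norm ((T ^^ snd VP) (fst VP i)) < (1/2) ^ m) \<and> norm (fst VP m - d m) < (1/2) ^ m"
    for m and VP :: "(nat \<Rightarrow> 'a) \<times> nat"
  define refines where "refines m VP VP' \<longleftrightarrow> snd VP < snd VP' \<and>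
      (\<forall>i\<le>m. \<forall>j\<le>snd VP. norm ((T ^^ j) (fst VP' i - fst VP i)) < (1/2) ^ Suc m)"
    for m and VP VP' :: "(nat \<Rightarrow> 'a) \<times> nat"
  have "\<exists>VP. stage 0 VP"
  proof -
    obtain v :: "nat \<Rightarrow> 'a" and n where "norm (v 0 - d 0) < 1" and "norm ((T ^^ n) (v 0)) < 1"
      using approx[where m=0 and u="\<lambda>_. d 0" and e=1 and N=0 and P=0] by auto
    then have "stage 0 (v, n)"
      by (simp add: stage_def)
    then show ?thesis ..
  qed
  moreover have "\<exists>VP'. stage (Suc m) VP' \<and> refines m VP VP'" if "stage m VP" for m VP
  proof -
    obtain V P where VP: "VP = (V, P)"
      by fastforce
    obtain v n where "Suc P \<le> n" and vn: "\<forall>i\<le>Suc m.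
        (\<forall>j\<le>P. norm ((T ^^ j) (v i - (V(Suc m := d (Suc m))) i)) < (1/2) ^ Suc m) \<and>
        norm ((T ^^ n) (v i)) < (1/2) ^ Suc m"
      using approx[where m="Suc m" and u="V(Suc m := d (Suc m))" and e="(1/2) ^ Suc m" and N="Suc P" and P=P] by auto
    have "stage (Suc m) (v, n)"
      using vn by (fastforce simp: stage_def)
    moreover have "refines m VP (v, n)"
    proof -
      have "norm ((T ^^ j) (v i - V i)) < (1/2) ^ Suc m" if "i \<le> m" "j \<le> P" for i j
        using conjunct1[OF vn[rule_format, of i]] that by simp
      then show ?thesis
        using \<open>Suc P \<le> n\<close> by (simp add: refines_def VP)
    qed
    ultimately show ?thesis by blast
  qed
  ultimately obtain f where "\<And>m. stage m (f m) \<and> refines m (f m) (f (Suc m))"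
    using dependent_nat_choice[of stage refines] by blast
  then show thesis
    by (intro that[of "\<lambda>m. snd (f m)" "\<lambda>m. fst (f m)"])
      (auto simp: strict_mono_Suc_iff stage_def refines_def)
qed

lemma limits_of_nested_approximations:
  fixes T :: "'a::banach \<Rightarrow> 'a"
  assumes bl: "bounded_linear T" and "strict_mono p"
    and small: "\<And>m i. i \<le> m \<Longrightarrow> norm ((T ^^ p m) (V m i)) < (1/2) ^ m"
    and near: "\<And>m. norm (V m m - d m) < (1/2) ^ m"
    and steps: "\<And>m i j. i \<le> m \<Longrightarrow> j \<le> p m \<Longrightarrow> norm ((T ^^ j) (V (Suc m) i - V m i)) < (1/2) ^ Suc m"
  obtains w where "\<And>i. dist (w i) (d i) \<le> 2 * (1/2) ^ i"
    and "\<And>i l. i \<le> l \<Longrightarrow> norm ((T ^^ p l) (w i)) \<le> 2 * (1/2) ^ l"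
proof -
  have lin: "bounded_linear (T ^^ j)" for j
    by (rule bounded_linear_funpow[OF bl])
  have orbit_steps: "norm ((T ^^ j) (V (Suc m) i) - (T ^^ j) (V m i)) \<le> (1/2) ^ Suc m"
    if "i \<le> l" "j \<le> p l" "l \<le> m" for i j l m
  proof -
    have "j \<le> p m"
      using that strict_mono_leD[OF \<open>strict_mono p\<close> \<open>l \<le> m\<close>] by linarith
    with that have "norm ((T ^^ j) (V (Suc m) i - V m i)) < (1/2) ^ Suc m"
      by (intro steps) simp_all
    then show ?thesis
      by (simp add: linear_diff[OF bounded_linear.linear[OF lin]])
  qed
  define w where "w i = lim (\<lambda>m. V m i)" for i
  have "convergent (\<lambda>m. V m i)" for i
    by (rule convergent_if_geometric_steps[of i]) (use orbit_steps[of i i 0] in auto)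
  then have lim: "(\<lambda>m. V m i) \<longlonglongrightarrow> w i" for i
    by (simp add: w_def convergent_LIMSEQ_iff)
  have limit_near: "norm ((T ^^ j) (w i) - (T ^^ j) (V l i)) \<le> (1/2) ^ l"
    if "i \<le> l" "j \<le> p l" for i j l
    by (rule norm_limit_diff_le_if_geometric_steps[OF orbit_steps[OF that] bounded_linear.tendsto[OF lin lim]])
  show thesis
  proof
    show "dist (w i) (d i) \<le> 2 * (1/2) ^ i" for i
      using limit_near[of i i 0] near[of i] norm_triangle_ineq[of "w i - V i i" "V i i - d i"]
      by (simp add: dist_norm)
    show "norm ((T ^^ p l) (w i)) \<le> 2 * (1/2) ^ l" if "i \<le> l" for i l
      using limit_near[OF that order_refl] small[OF that]
        norm_triangle_ineq[of "(T ^^ p l) (w i) - (T ^^ p l) (V l i)" "(T ^^ p l) (V l i)"]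
      by simp
  qed
qed

lemma null_subsequence_on_dense_set_if_dense_Prox:
  fixes T :: "'a::banach \<Rightarrow> 'a"
  assumes sep: "separable_space (euclidean :: 'a topology)" and bl: "bounded_linear T"
    and dense: "\<And>k. 2 \<le> k \<Longrightarrow> dense_in_power k (Prox k T)"
  shows "\<exists>p K. closure K = UNIV \<and> (\<forall>x\<in>K. (\<lambda>n. (T ^^ p n) x) \<longlonglongrightarrow> 0)"
proof -
  obtain d :: "nat \<Rightarrow> 'a" where d: "\<And>x e N. e > 0 \<Longrightarrow> \<exists>i\<ge>N. dist (d i) x < e"
    using separable_imp_recurrent_dense_sequence[OF sep] by blast
  have approx: "\<exists>v n. N \<le> n \<and>
      (\<forall>i\<le>m. (\<forall>j\<le>P. norm ((T ^^ j) (v i - u i)) < e) \<and> norm ((T ^^ n) (v i)) < e)"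
    if "e > 0" for m :: nat and u e N P
    by (rule dense_Prox_approx_small_orbit_funpow[OF bl dense that]) simp
  obtain p and V :: "nat \<Rightarrow> nat \<Rightarrow> 'a" where p: "strict_mono p"
    and V_small: "\<And>m i. i \<le> m \<Longrightarrow> norm ((T ^^ p m) (V m i)) < (1/2) ^ m"
    and V_near: "\<And>m. norm (V m m - d m) < (1/2) ^ m"
    and V_steps: "\<And>m i j. i \<le> m \<Longrightarrow> j \<le> p m \<Longrightarrow> norm ((T ^^ j) (V (Suc m) i - V m i)) < (1/2) ^ Suc m"
    using nested_small_orbit_approximations[where d = d, OF approx] by blast
  obtain w where near: "\<And>i. dist (w i) (d i) \<le> 2 * (1/2) ^ i"
    and small: "\<And>i l. i \<le> l \<Longrightarrow> norm ((T ^^ p l) (w i)) \<le> 2 * (1/2) ^ l"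
    using limits_of_nested_approximations[OF bl p V_small V_near V_steps] by blast
  have geometric_null: "(\<lambda>l. 2 * (1/2::real) ^ l) \<longlonglongrightarrow> 0"
    by (rule tendsto_mult_right_zero, rule LIMSEQ_realpow_zero) simp_all
  have "(\<lambda>i. dist (w i) (d i)) \<longlonglongrightarrow> 0"
    using near by (intro tendsto_sandwich[OF _ _ tendsto_const geometric_null]) simp_all
  with d have dense_range: "closure (range w) = UNIV"
    by (rule dense_range_if_close_to_recurrent)
  have null: "(\<lambda>l. (T ^^ p l) (w i)) \<longlonglongrightarrow> 0" for i
  proof (rule Lim_null_comparison[OF _ geometric_null])
    show "eventually (\<lambda>l. norm ((T ^^ p l) (w i)) \<le> 2 * (1/2) ^ l) sequentially"
      unfolding eventually_sequentially using small by blast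
  qed
  show ?thesis
  proof (intro exI conjI ballI)
    show "closure (range w) = UNIV"
      by (rule dense_range)
  next
    fix x
    assume "x \<in> range w"
    then obtain i where "x = w i" ..
    then show "(\<lambda>n. (T ^^ p n) x) \<longlonglongrightarrow> 0"
      using null by simp
  qed
qed

lemma dense_Prox_if_null_subsequence_on_dense_set:
  fixes T :: "'a::real_normed_vector \<Rightarrow> 'a"
  assumes bl: "bounded_linear T" and dense: "closure K = UNIV"
    and null: "\<forall>x\<in>K. (\<lambda>n. (T ^^ p n) x) \<longlonglongrightarrow> 0" and "2 \<le> k"
  shows "dense_in_power k (Prox k T)"
  unfolding dense_in_power_def
proof (intro ballI allI impI)
  fix y :: "nat \<Rightarrow> 'a" and e :: real
  assume "e > 0"
  then have "\<forall>i. \<exists>z\<in>K. dist z (y i) < e"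
    using dense by (metis UNIV_I closure_approachable)
  then obtain g where g: "\<And>i. g i \<in> K" "\<And>i. dist (g i) (y i) < e"
    by metis
  define x where "x = restrict g {..<k}"
  have "\<exists>\<^sub>F n in sequentially. \<forall>i j. i < j \<and> j < k \<longrightarrow> norm ((T ^^ n) (x i) - (T ^^ n) (x j)) < c"
    if "c > 0" for c
    unfolding frequently_sequentially
  proof
    fix N
    have orbit_null: "(\<lambda>n. (T ^^ (N + p n)) (x i)) \<longlonglongrightarrow> 0" if "i < k" for i
    proof -
      have "(\<lambda>n. (T ^^ N) ((T ^^ p n) (x i))) \<longlonglongrightarrow> 0"
        by (rule bounded_linear.tendsto_zero[OF bounded_linear_funpow[OF bl]])
          (use null g(1) that in \<open>simp add: x_def\<close>)
      then show ?thesis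
        by (simp add: funpow_add)
    qed
    have "eventually (\<lambda>n. norm ((T ^^ (N + p n)) (x i)) < c / 2) sequentially" if "i < k" for i
      by (rule order_tendstoD(2)[OF tendsto_norm_zero[OF orbit_null[OF that]]]) (use \<open>c > 0\<close> in simp)
    then have "eventually (\<lambda>n. \<forall>i\<in>{..<k}. norm ((T ^^ (N + p n)) (x i)) < c / 2) sequentially"
      by (intro eventually_ball_finite) auto
    then obtain n where small: "\<And>i. i < k \<Longrightarrow> norm ((T ^^ (N + p n)) (x i)) < c / 2"
      by (auto simp: eventually_sequentially)
    have "norm ((T ^^ (N + p n)) (x i) - (T ^^ (N + p n)) (x j)) < c" if "i < j" "j < k" for i j
      using norm_triangle_ineq4[of "(T ^^ (N + p n)) (x i)" "(T ^^ (N + p n)) (x j)"]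
        small[of i] small[of j] that by linarith
    then show "\<exists>n\<ge>N. \<forall>i j. i < j \<and> j < k \<longrightarrow> norm ((T ^^ n) (x i) - (T ^^ n) (x j)) < c"
      by (intro exI[of _ "N + p n"]) auto
  qed
  moreover have "x \<in> PiE {..<k} (\<lambda>_. UNIV)"
    by (simp add: x_def)
  ultimately have "x \<in> Prox k T"
    using \<open>2 \<le> k\<close> by (simp add: Prox_iff)
  moreover have "\<forall>i<k. dist (x i) (y i) < e"
    by (simp add: x_def g(2))
  ultimately show "\<exists>x\<in>Prox k T. \<forall>i<k. dist (x i) (y i) < e"
    by blast
qed

theorem lemma3p3:
  fixes T :: "'a::banach \<Rightarrow> 'a"
  assumes "separable_space (euclidean :: 'a topology)"
    and "bounded_linear T"
  shows "(\<forall>k\<ge>2. dense_in_power k (Prox k T)) \<longleftrightarrow>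
         (\<exists>p :: nat \<Rightarrow> nat. \<exists>K :: 'a set. closure K = UNIV \<and>
            (\<forall>x\<in>K. (\<lambda>n. (T ^^ p n) x) \<longlonglongrightarrow> 0))"
proof
  assume "\<forall>k\<ge>2. dense_in_power k (Prox k T)"
  then show "\<exists>p K. closure K = UNIV \<and> (\<forall>x\<in>K. (\<lambda>n. (T ^^ p n) x) \<longlonglongrightarrow> 0)"
    by (intro null_subsequence_on_dense_set_if_dense_Prox[OF assms]) simp
next
  assume "\<exists>p K. closure K = UNIV \<and> (\<forall>x\<in>K. (\<lambda>n. (T ^^ p n) x) \<longlonglongrightarrow> 0)"
  then obtain p K where "closure K = UNIV" and "\<forall>x\<in>K. (\<lambda>n. (T ^^ p n) x) \<longlonglongrightarrow> 0"
    by blast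
  then show "\<forall>k\<ge>2. dense_in_power k (Prox k T)"
    by (intro allI impI dense_Prox_if_null_subsequence_on_dense_set[OF assms(2)])
qed

end
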